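(* Let $\mathfrak{P}=(\rho_{t_0},\mathcal{E}_{t_1\leftarrow t_0},\dots,\mathcal{E}_{t_n\leftarrow t_{n-1}})$ be a multi-time quantum process over $n+1$ time steps, with fixed projective measurements $\{\Pi^{t_k}_{b_k}\}_{b_k}$ (and, for the doubled distribution, a second family $\{\Pi^{t_k}_{a_k}\}_{a_k}$) at each time $t_k$. Let $0=i_0<i_1<\dots<i_k\le n$ and let $\mathfrak{P}'=(\rho_{t_0},\mathcal{E}'_{t_{i_1}\leftarrow t_{i_0}},\dots,\mathcal{E}'_{t_{i_k}\leftarrow t_{i_{k-1}}})$ be the sub-process with the same initial state and with $$\mathcal{E}'_{t_{i_j}\leftarrow t_{i_{j-1}}}=\mathcal{E}_{t_{i_j}\leftarrow t_{i_j-1}}\circ\mathcal{E}_{t_{i_j-1}\leftarrow t_{i_j-2}}\circ\cdots\circ\mathcal{E}_{t_{i_{j-1}+1}\leftarrow t_{i_{j-1}}},$$ measured at times $t_{i_0},t_{i_1},\dots,t_{i_k}$ with the same projectors as in $\mathfrak{P}$. Then the temporal KD quasiprobability distribution (right, left, or doubled) of $\mathfrak{P}'$ equals the marginal of the corresponding temporal KD quasiprobability distribution of $\mathfrak{P}$ obtained by summing over all outcome variables at the time steps not in $\{t_{i_0},\dots,t_{i_k}\}$ (for the doubled distribution, summing over both the ket-side and bra-side outcomes at those times). Moreover, if two such sub-processes have retained time sets $S$ and $T$ with $S\cap T\neq\emptyset$, then the marginals of their temporal KD distributions onto the outcome variables at the times in $S\cap T$ coincide.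
   Context: All Hilbert spaces are finite-dimensional. A multi-time quantum process $\mathfrak{P}=(\rho_{t_0},\mathcal{E}_{t_1\leftarrow t_0},\dots,\mathcal{E}_{t_n\leftarrow t_{n-1}})$ consists of a density operator $\rho_{t_0}$ on $\mathcal{H}_{t_0}$ and completely positive trace-preserving (CPTP) maps $\mathcal{E}_{t_j\leftarrow t_{j-1}}:\mathbf{B}(\mathcal{H}_{t_{j-1}})\to\mathbf{B}(\mathcal{H}_{t_j})$, extended linearly to all (not necessarily Hermitian) operators. At each time $t_k$ a complete family of orthogonal projectors is fixed ($\sum_{b}\Pi^{t_k}_b=\mathbb{I}$, $\Pi^{t_k}_b\Pi^{t_k}_{b'}=\delta_{bb'}\Pi^{t_k}_b$). The right temporal Kirkwood–Dirac (KD) quasiprobability distribution is $$\overrightarrow{Q}_{\rm KD}(b_n,\dots,b_0)=\operatorname{Tr}\Big[\mathcal{E}_{t_n\leftarrow t_{n-1}}\Big(\cdots\mathcal{E}_{t_2\leftarrow t_1}\big(\mathcal{E}_{t_1\leftarrow t_0}(\rho_{t_0}\Pi^{t_0}_{b_0})\Pi^{t_1}_{b_1}\big)\Pi^{t_2}_{b_2}\cdots\Big)\Pi^{t_n}_{b_n}\Big],$$ the left one is $$\overleftarrow{Q}_{\rm KD}(a_n,\dots,a_0)=\operatorname{Tr}\Big[\Pi^{t_n}_{a_n}\mathcal{E}_{t_n\leftarrow t_{n-1}}\Big(\cdots\Pi^{t_1}_{a_1}\mathcal{E}_{t_1\leftarrow t_0}(\Pi^{t_0}_{a_0}\rho_{t_0})\cdots\Big)\Big],$$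 and the doubled one (ket-side projectors $\Pi^{t_k}_{a_k}$, bra-side projectors $\Pi^{t_k}_{b_k}$) is $$\overleftrightarrow{Q}_{\rm KD}(a_n,\dots,a_0;b_n,\dots,b_0)=\operatorname{Tr}\Big[\Pi^{t_n}_{a_n}\mathcal{E}_{t_n\leftarrow t_{n-1}}\Big(\cdots\Pi^{t_1}_{a_1}\mathcal{E}_{t_1\leftarrow t_0}\big(\Pi^{t_0}_{a_0}\rho_{t_0}\Pi^{t_0}_{b_0}\big)\Pi^{t_1}_{b_1}\cdots\Big)\Pi^{t_n}_{b_n}\Big].$$ *)

theory Defs
  imports "Jordan_Normal_Form.Matrix" "HOL-Library.FuncSet"
begin

definition mtrace :: "complex mat \<Rightarrow> complex" where
  "mtrace A = (\<Sum>i<dim_row A. A $$ (i,i))"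

definition dagger :: "complex mat \<Rightarrow> complex mat" where
  "dagger A = mat (dim_col A) (dim_row A) (\<lambda>(i,j). cnj (A $$ (j,i)))"

definition psd :: "nat \<Rightarrow> complex mat \<Rightarrow> bool" where
  "psd d A \<longleftrightarrow> A \<in> carrier_mat d d \<and> dagger A = A \<and>
     (\<forall>v \<in> carrier_vec d. Im ((A *\<^sub>v v) \<bullet>c v) = 0 \<and> Re ((A *\<^sub>v v) \<bullet>c v) \<ge> 0)"

definition density_op :: "nat \<Rightarrow> complex mat \<Rightarrow> bool" where
  "density_op d \<rho> \<longleftrightarrow> psd d \<rho> \<and> mtrace \<rho> = 1"

(* linear map B(C^din) -> B(C^dout), defined on all (not nec. Hermitian) operators *)
definition lin_map :: "nat \<Rightarrow> nat \<Rightarrow> (complex mat \<Rightarrow> complex mat) \<Rightarrow> bool" where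
  "lin_map din dout E \<longleftrightarrow>
     (\<forall>X \<in> carrier_mat din din. E X \<in> carrier_mat dout dout) \<and>
     (\<forall>X \<in> carrier_mat din din. \<forall>Y \<in> carrier_mat din din. E (X + Y) = E X + E Y) \<and>
     (\<forall>c. \<forall>X \<in> carrier_mat din din. E (c \<cdot>\<^sub>m X) = c \<cdot>\<^sub>m E X)"

definition sub_block :: "nat \<Rightarrow> complex mat \<Rightarrow> nat \<Rightarrow> nat \<Rightarrow> complex mat" where
  "sub_block din X p q = mat din din (\<lambda>(i,j). X $$ (p * din + i, q * din + j))"

(* (id_m \<otimes> E) applied to an operator on C^m \<otimes> C^din *)
definition ampl :: "nat \<Rightarrow> nat \<Rightarrow> nat \<Rightarrow> (complex mat \<Rightarrow> complex mat) \<Rightarrow> complex mat \<Rightarrow> complex mat" where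
  "ampl m din dout E X = mat (m * dout) (m * dout)
     (\<lambda>(r,c). E (sub_block din X (r div dout) (c div dout)) $$ (r mod dout, c mod dout))"

definition comp_pos :: "nat \<Rightarrow> nat \<Rightarrow> (complex mat \<Rightarrow> complex mat) \<Rightarrow> bool" where
  "comp_pos din dout E \<longleftrightarrow> (\<forall>m X. psd (m * din) X \<longrightarrow> psd (m * dout) (ampl m din dout E X))"

definition trace_pres :: "nat \<Rightarrow> (complex mat \<Rightarrow> complex mat) \<Rightarrow> bool" where
  "trace_pres din E \<longleftrightarrow> (\<forall>X \<in> carrier_mat din din. mtrace (E X) = mtrace X)"

definition cptp :: "nat \<Rightarrow> nat \<Rightarrow> (complex mat \<Rightarrow> complex mat) \<Rightarrow> bool" where
  "cptp din dout E \<longleftrightarrow> lin_map din dout E \<and> comp_pos din dout E \<and> trace_pres din E"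

definition quantum_process :: "nat \<Rightarrow> (nat \<Rightarrow> nat) \<Rightarrow> complex mat \<Rightarrow> (nat \<Rightarrow> complex mat \<Rightarrow> complex mat) \<Rightarrow> bool" where
  "quantum_process n d \<rho> E \<longleftrightarrow> density_op (d 0) \<rho> \<and> (\<forall>j \<in> {1..n}. cptp (d (j - 1)) (d j) (E j))"

definition msum :: "nat \<Rightarrow> ('b \<Rightarrow> complex mat) \<Rightarrow> 'b set \<Rightarrow> complex mat" where
  "msum d f S = mat d d (\<lambda>ij. \<Sum>b\<in>S. f b $$ ij)"

definition proj_family :: "nat \<Rightarrow> 'b set \<Rightarrow> ('b \<Rightarrow> complex mat) \<Rightarrow> bool" where
  "proj_family d S P \<longleftrightarrow> finite S \<and>
     (\<forall>b \<in> S. P b \<in> carrier_mat d d \<and> dagger (P b) = P b) \<and>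
     (\<forall>b \<in> S. \<forall>b' \<in> S. P b * P b' = (if b = b' then P b else 0\<^sub>m d d)) \<and>
     msum d P S = 1\<^sub>m d"

definition measurements :: "nat \<Rightarrow> (nat \<Rightarrow> nat) \<Rightarrow> (nat \<Rightarrow> 'b set) \<Rightarrow> (nat \<Rightarrow> 'b \<Rightarrow> complex mat) \<Rightarrow> bool" where
  "measurements n d S P \<longleftrightarrow> (\<forall>k \<le> n. proj_family (d k) (S k) (P k))"

fun rstate :: "complex mat \<Rightarrow> (nat \<Rightarrow> complex mat \<Rightarrow> complex mat) \<Rightarrow> (nat \<Rightarrow> 'b \<Rightarrow> complex mat) \<Rightarrow> (nat \<Rightarrow> 'b) \<Rightarrow> nat \<Rightarrow> complex mat" where
  "rstate \<rho> E P b 0 = \<rho> * P 0 (b 0)"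
| "rstate \<rho> E P b (Suc k) = E (Suc k) (rstate \<rho> E P b k) * P (Suc k) (b (Suc k))"

fun lstate :: "complex mat \<Rightarrow> (nat \<Rightarrow> complex mat \<Rightarrow> complex mat) \<Rightarrow> (nat \<Rightarrow> 'b \<Rightarrow> complex mat) \<Rightarrow> (nat \<Rightarrow> 'b) \<Rightarrow> nat \<Rightarrow> complex mat" where
  "lstate \<rho> E P a 0 = P 0 (a 0) * \<rho>"
| "lstate \<rho> E P a (Suc k) = P (Suc k) (a (Suc k)) * E (Suc k) (lstate \<rho> E P a k)"

fun dstate :: "complex mat \<Rightarrow> (nat \<Rightarrow> complex mat \<Rightarrow> complex mat) \<Rightarrow> (nat \<Rightarrow> 'b \<Rightarrow> complex mat) \<Rightarrow> (nat \<Rightarrow> 'b \<Rightarrow> complex mat) \<Rightarrow> (nat \<Rightarrow> 'b) \<Rightarrow> (nat \<Rightarrow> 'b) \<Rightarrow> nat \<Rightarrow> complex mat" where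
  "dstate \<rho> E PA PB a b 0 = PA 0 (a 0) * \<rho> * PB 0 (b 0)"
| "dstate \<rho> E PA PB a b (Suc k) = PA (Suc k) (a (Suc k)) * E (Suc k) (dstate \<rho> E PA PB a b k) * PB (Suc k) (b (Suc k))"

definition right_KD where "right_KD n \<rho> E P b = mtrace (rstate \<rho> E P b n)"
definition left_KD where "left_KD n \<rho> E P a = mtrace (lstate \<rho> E P a n)"
definition doubled_KD where "doubled_KD n \<rho> E PA PB a b = mtrace (dstate \<rho> E PA PB a b n)"

fun chain :: "(nat \<Rightarrow> complex mat \<Rightarrow> complex mat) \<Rightarrow> nat \<Rightarrow> nat \<Rightarrow> complex mat \<Rightarrow> complex mat" where
  "chain E a 0 = id"
| "chain E a (Suc m) = E (a + Suc m) \<circ> chain E a m"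

definition sub_channels :: "(nat \<Rightarrow> complex mat \<Rightarrow> complex mat) \<Rightarrow> (nat \<Rightarrow> nat) \<Rightarrow> nat \<Rightarrow> complex mat \<Rightarrow> complex mat" where
  "sub_channels E i j = chain E (i (j - 1)) (i j - i (j - 1))"

definition sub_times :: "nat \<Rightarrow> nat \<Rightarrow> (nat \<Rightarrow> nat) \<Rightarrow> bool" where
  "sub_times n k i \<longleftrightarrow> i 0 = 0 \<and> (\<forall>j < k. i j < i (Suc j)) \<and> i k \<le> n"

end

(*
  All three KD distributions are traces of one recursion
    X_0 = F_0(w_0)(rho),   X_(m+1) = F_(m+1)(w_(m+1))(E_(m+1)(X_m)),
  where F_t x is right, left or two-sided multiplication by the projectors at time t. Only two
  properties of these "instruments" matter: each F_t x is linear, and summing F_t x over the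
  outcomes x gives the identity. Hence the outcomes at unretained times can be summed out one time
  step after another, by linearity: at an unretained time the instrument disappears and only the
  channel remains, so between two retained times the composite channel of the sub-process
  appears, and after the last retained time the remaining channels vanish under the trace because
  they are trace preserving. Two sub-processes have consistent marginals onto common times because
  both are marginals of the same distribution of the full process.
*)

theory Submission
  imports Defs
begin

lemma msum_carrier [simp]: "msum d f S \<in> carrier_mat d d"
  by (simp add: msum_def)

lemma msum_cong: "(\<And>s. s \<in> S \<Longrightarrow> f s = g s) \<Longrightarrow> msum d f S = msum d g S"
  unfolding msum_def by (intro cong_mat) auto

lemma msum_reindex: "inj_on g S \<Longrightarrow> msum d f (g ` S) = msum d (\<lambda>x. f (g x)) S"
  unfolding msum_def by (intro eq_matI) (auto simp: sum.reindex)

lemma msum_empty [simp]: "msum d f {} = 0\<^sub>m d d"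
  by (intro eq_matI) (auto simp: msum_def)

lemma msum_insert:
  "finite S \<Longrightarrow> x \<notin> S \<Longrightarrow> f x \<in> carrier_mat d d \<Longrightarrow> msum d f (insert x S) = f x + msum d f S"
  by (intro eq_matI) (auto simp: msum_def)

lemma msum_singleton [simp]: "f x \<in> carrier_mat d d \<Longrightarrow> msum d f {x} = f x"
  by (intro eq_matI) (auto simp: msum_def)

lemma msum_Times: "msum d f (A \<times> B) = msum d (\<lambda>a. msum d (\<lambda>b. f (a, b)) B) A"
  by (intro eq_matI) (auto simp: msum_def sum.cartesian_product)

lemma msum_PiE_insert:
  assumes "x \<notin> S"
  shows "msum d f (PiE (insert x S) T) = msum d (\<lambda>y. msum d (\<lambda>g. f (g(x := y))) (PiE S T)) (T x)"
  using assms by (simp add: PiE_insert_eq msum_reindex inj_combinator msum_Times)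

lemma mtrace_msum:
  "(\<And>s. s \<in> S \<Longrightarrow> f s \<in> carrier_mat d d) \<Longrightarrow> mtrace (msum d f S) = (\<Sum>s\<in>S. mtrace (f s))"
  unfolding mtrace_def msum_def by (simp add: sum.swap[of _ S], intro sum.cong) auto

lemma lin_map_zero:
  assumes "lin_map din dout G"
  shows "G (0\<^sub>m din din) = 0\<^sub>m dout dout"
proof -
  have carrier: "G (0\<^sub>m din din) \<in> carrier_mat dout dout"
    using assms unfolding lin_map_def by auto
  have "G (0\<^sub>m din din) = G (0 \<cdot>\<^sub>m 0\<^sub>m din din)"
    by simp
  also have "\<dots> = 0 \<cdot>\<^sub>m G (0\<^sub>m din din)"
    using assms zero_carrier_mat unfolding lin_map_def by blast
  also have "\<dots> = 0\<^sub>m dout dout"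
    using carrier by (intro eq_matI) auto
  finally show ?thesis .
qed

lemma lin_map_msum:
  assumes G: "lin_map din dout G" and "finite S" and "\<And>s. s \<in> S \<Longrightarrow> f s \<in> carrier_mat din din"
  shows "G (msum din f S) = msum dout (\<lambda>s. G (f s)) S"
  using assms(2,3)
proof (induction S rule: finite_induct)
  case empty
  show ?case
    using lin_map_zero[OF G] by simp
next
  case (insert x S)
  have "G (msum din f (insert x S)) = G (f x) + G (msum din f S)"
    using insert G by (simp add: msum_insert lin_map_def)
  with insert G show ?case
    by (simp add: msum_insert lin_map_def)
qed

lemma lin_map_mult_right: "P \<in> carrier_mat d d \<Longrightarrow> lin_map d d (\<lambda>X. X * P)"
  unfolding lin_map_def by (auto simp: add_mult_distrib_mat)

lemma lin_map_mult_left: "P \<in> carrier_mat d d \<Longrightarrow> lin_map d d (\<lambda>X. P * X)"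
  unfolding lin_map_def by (auto simp: mult_add_distrib_mat mult_smult_distrib)

lemma lin_map_sandwich:
  "P \<in> carrier_mat d d \<Longrightarrow> Q \<in> carrier_mat d d \<Longrightarrow> lin_map d d (\<lambda>X. P * X * Q)"
  unfolding lin_map_def
  by (auto simp: mult_add_distrib_mat add_mult_distrib_mat[of _ d d]
                 mult_smult_distrib mult_smult_assoc_mat[of _ d d])

lemma sub_times_strict_mono:
  assumes "sub_times n k i"
  shows "strict_mono_on {..k} i"
proof (rule strict_mono_onI)
  fix j j' :: nat
  assume "j \<in> {..k}" "j' \<in> {..k}" "j < j'"
  then show "i j < i j'"
  proof (induction j')
    case (Suc j')
    then have "i j' < i (Suc j')"
      using assms unfolding sub_times_def by auto
    with Suc show ?case
      by (cases "j = j'") auto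
  qed simp
qed

lemma sub_times_le_bound: "sub_times n k i \<Longrightarrow> j \<le> k \<Longrightarrow> i j \<le> n"
  using strict_mono_on_leD[OF sub_times_strict_mono, of n k i j k]
  unfolding sub_times_def by auto

lemma sub_times_not_retained_between:
  "sub_times n k i \<Longrightarrow> j < k \<Longrightarrow> i j < t \<Longrightarrow> t < i (Suc j) \<Longrightarrow> t \<notin> i ` {..k}"
  using strict_mono_on_less[OF sub_times_strict_mono, of n k i] by fastforce

lemma sub_times_not_retained_after: "sub_times n k i \<Longrightarrow> i k < t \<Longrightarrow> t \<notin> i ` {..k}"
  using strict_mono_on_less[OF sub_times_strict_mono, of n k i] by fastforce

lemma sum_PiE_group_restrict:
  fixes f :: "(nat \<Rightarrow> 'o) \<Rightarrow> 'a::comm_monoid_add" and i :: "nat \<Rightarrow> nat"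
  assumes fin: "\<And>t. t \<le> n \<Longrightarrow> finite (\<Omega> t)" and i: "\<And>j. j \<le> k \<Longrightarrow> i j \<le> n"
    and C: "C \<subseteq> i ` {..k}"
  shows "(\<Sum>c\<in>{c \<in> PiE {..k} (\<lambda>j. \<Omega> (i j)). \<forall>j\<le>k. i j \<in> C \<longrightarrow> c j = h (i j)}.
            \<Sum>w\<in>{w \<in> PiE {..n} \<Omega>. \<forall>j\<le>k. w (i j) = c j}. f w)
       = (\<Sum>w\<in>{w \<in> PiE {..n} \<Omega>. \<forall>t\<in>C. w t = h t}. f w)"
proof -
  define S where "S = {w \<in> PiE {..n} \<Omega>. \<forall>t\<in>C. w t = h t}"
  define T where "T = {c \<in> PiE {..k} (\<lambda>j. \<Omega> (i j)). \<forall>j\<le>k. i j \<in> C \<longrightarrow> c j = h (i j)}"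
  define r where "r w = (\<lambda>j\<in>{..k}. w (i j))" for w :: "nat \<Rightarrow> 'o"
  have "finite S"
    unfolding S_def by (rule finite_subset[of _ "PiE {..n} \<Omega>"]) (auto intro!: finite_PiE fin)
  moreover have "finite T"
    unfolding T_def by (rule finite_subset[of _ "PiE {..k} (\<lambda>j. \<Omega> (i j))"]) (auto intro!: finite_PiE fin i)
  moreover have "r ` S \<subseteq> T"
    using i by (auto simp: S_def T_def r_def PiE_iff)
  ultimately have "(\<Sum>c\<in>T. \<Sum>w\<in>{w. w \<in> S \<and> r w = c}. f w) = (\<Sum>w\<in>S. f w)"
    by (rule sum.group)
  moreover have "{w. w \<in> S \<and> r w = c} = {w \<in> PiE {..n} \<Omega>. \<forall>j\<le>k. w (i j) = c j}" if "c \<in> T" for c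
    using that C by (auto simp: S_def T_def r_def PiE_iff extensional_def fun_eq_iff)
  ultimately show ?thesis
    unfolding S_def T_def by simp
qed

lemma sum_PiE_pairs:
  "(\<Sum>(a, b)\<in>{(a, b). a \<in> PiE I A \<and> b \<in> PiE I B \<and> Q a b}. f a b)
 = (\<Sum>w\<in>{w \<in> PiE I (\<lambda>t. A t \<times> B t). Q (\<lambda>t\<in>I. fst (w t)) (\<lambda>t\<in>I. snd (w t))}.
      f (\<lambda>t\<in>I. fst (w t)) (\<lambda>t\<in>I. snd (w t)))"
  by (rule sum.reindex_bij_witness[of _ "\<lambda>w. (\<lambda>t\<in>I. fst (w t), \<lambda>t\<in>I. snd (w t))"
                                         "\<lambda>(a, b). \<lambda>t\<in>I. (a t, b t)"])
     (auto simp: PiE_iff extensional_restrict cong: restrict_cong)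

fun measured_state ::
  "complex mat \<Rightarrow> (nat \<Rightarrow> complex mat \<Rightarrow> complex mat) \<Rightarrow> (nat \<Rightarrow> 'o \<Rightarrow> complex mat \<Rightarrow> complex mat)
     \<Rightarrow> (nat \<Rightarrow> 'o) \<Rightarrow> nat \<Rightarrow> complex mat" where
  "measured_state \<rho> E F w 0 = F 0 (w 0) \<rho>"
| "measured_state \<rho> E F w (Suc m) = F (Suc m) (w (Suc m)) (E (Suc m) (measured_state \<rho> E F w m))"

lemma measured_state_cong:
  "(\<And>t. t \<le> m \<Longrightarrow> w t = w' t) \<Longrightarrow> measured_state \<rho> E F w m = measured_state \<rho> E F w' m"
  by (induction m) auto

lemma measured_state_fun_upd [simp]:
  "m < t \<Longrightarrow> measured_state \<rho> E F (w(t := y)) m = measured_state \<rho> E F w m"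
  by (rule measured_state_cong) auto

locale instrumented_process =
  fixes n :: nat and d :: "nat \<Rightarrow> nat" and \<rho> :: "complex mat"
    and E :: "nat \<Rightarrow> complex mat \<Rightarrow> complex mat"
    and F :: "nat \<Rightarrow> 'o \<Rightarrow> complex mat \<Rightarrow> complex mat" and \<Omega> :: "nat \<Rightarrow> 'o set"
  assumes initial_carrier: "\<rho> \<in> carrier_mat (d 0) (d 0)"
    and channel_lin: "m < n \<Longrightarrow> lin_map (d m) (d (Suc m)) (E (Suc m))"
    and channel_trace_pres: "m < n \<Longrightarrow> trace_pres (d m) (E (Suc m))"
    and instrument_lin: "t \<le> n \<Longrightarrow> x \<in> \<Omega> t \<Longrightarrow> lin_map (d t) (d t) (F t x)"
    and instrument_complete:
      "t \<le> n \<Longrightarrow> X \<in> carrier_mat (d t) (d t) \<Longrightarrow> msum (d t) (\<lambda>x. F t x X) (\<Omega> t) = X"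
    and outcomes_finite: "t \<le> n \<Longrightarrow> finite (\<Omega> t)"
begin

lemma channel_carrier:
  "m < n \<Longrightarrow> X \<in> carrier_mat (d m) (d m) \<Longrightarrow> E (Suc m) X \<in> carrier_mat (d (Suc m)) (d (Suc m))"
  using channel_lin unfolding lin_map_def by blast

lemma instrument_carrier:
  "t \<le> n \<Longrightarrow> x \<in> \<Omega> t \<Longrightarrow> X \<in> carrier_mat (d t) (d t) \<Longrightarrow> F t x X \<in> carrier_mat (d t) (d t)"
  using instrument_lin unfolding lin_map_def by blast

lemma chain_carrier:
  "a + l \<le> n \<Longrightarrow> X \<in> carrier_mat (d a) (d a) \<Longrightarrow> chain E a l X \<in> carrier_mat (d (a + l)) (d (a + l))"
  by (induction l) (auto intro: channel_carrier)

lemma mtrace_chain: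
  "a + l \<le> n \<Longrightarrow> X \<in> carrier_mat (d a) (d a) \<Longrightarrow> mtrace (chain E a l X) = mtrace X"
proof (induction l)
  case (Suc l)
  then have "mtrace (E (Suc (a + l)) (chain E a l X)) = mtrace (chain E a l X)"
    using channel_trace_pres[of "a + l"] chain_carrier[of a l X] unfolding trace_pres_def by simp
  with Suc show ?case
    by simp
qed simp

lemma measured_state_carrier:
  "m \<le> n \<Longrightarrow> (\<And>t. t \<le> m \<Longrightarrow> w t \<in> \<Omega> t) \<Longrightarrow> measured_state \<rho> E F w m \<in> carrier_mat (d m) (d m)"
  by (induction m) (auto intro!: initial_carrier channel_carrier instrument_carrier)

lemma finite_PiE_outcomes:
  assumes "m \<le> n" and "\<And>t. Y t \<subseteq> \<Omega> t"
  shows "finite (PiE {..m} Y)"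
proof (intro finite_PiE)
  fix t
  assume "t \<in> {..m}"
  then show "finite (Y t)"
    using assms outcomes_finite[of t] by (meson atMost_iff finite_subset order_trans)
qed simp

lemma PiE_outcomes_mem: "(\<And>t. Y t \<subseteq> \<Omega> t) \<Longrightarrow> w \<in> PiE {..m} Y \<Longrightarrow> t \<le> m \<Longrightarrow> w t \<in> \<Omega> t"
  by (blast dest: PiE_mem)

definition marginal_state :: "nat \<Rightarrow> (nat \<Rightarrow> 'o set) \<Rightarrow> complex mat" where
  "marginal_state m Y = msum (d m) (\<lambda>w. measured_state \<rho> E F w m) (PiE {..m} Y)"

lemma marginal_state_carrier [simp]: "marginal_state m Y \<in> carrier_mat (d m) (d m)"
  by (simp add: marginal_state_def)

lemma marginal_state_0:
  assumes "\<And>t. Y t \<subseteq> \<Omega> t"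
  shows "marginal_state 0 Y = msum (d 0) (\<lambda>y. F 0 y \<rho>) (Y 0)"
proof -
  have "F 0 y \<rho> \<in> carrier_mat (d 0) (d 0)" if "y \<in> Y 0" for y
    using that assms by (blast intro: instrument_carrier initial_carrier)
  then show ?thesis
    unfolding marginal_state_def atMost_0 by (auto simp: msum_PiE_insert intro!: msum_cong)
qed

lemma marginal_state_Suc:
  assumes m: "m < n" and Y: "\<And>t. Y t \<subseteq> \<Omega> t"
  shows "marginal_state (Suc m) Y
       = msum (d (Suc m)) (\<lambda>y. F (Suc m) y (E (Suc m) (marginal_state m Y))) (Y (Suc m))"
proof -
  have fin: "finite (PiE {..m} Y)"
    using m Y by (intro finite_PiE_outcomes) auto
  have state: "measured_state \<rho> E F w m \<in> carrier_mat (d m) (d m)" if "w \<in> PiE {..m} Y" for w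
    using that m by (intro measured_state_carrier PiE_outcomes_mem[OF Y]) auto
  have "marginal_state (Suc m) Y = msum (d (Suc m))
      (\<lambda>y. msum (d (Suc m)) (\<lambda>w. F (Suc m) y (E (Suc m) (measured_state \<rho> E F w m))) (PiE {..m} Y))
      (Y (Suc m))"
    unfolding marginal_state_def atMost_Suc by (simp add: msum_PiE_insert)
  also have "\<dots> = msum (d (Suc m))
      (\<lambda>y. F (Suc m) y (msum (d (Suc m)) (\<lambda>w. E (Suc m) (measured_state \<rho> E F w m)) (PiE {..m} Y)))
      (Y (Suc m))"
    using m state by (intro msum_cong lin_map_msum[symmetric] instrument_lin fin channel_carrier)
      (auto intro: subsetD[OF Y])
  also have "\<dots> = msum (d (Suc m)) (\<lambda>y. F (Suc m) y (E (Suc m) (marginal_state m Y))) (Y (Suc m))"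
    unfolding marginal_state_def using m state by (simp add: lin_map_msum[OF channel_lin fin])
  finally show ?thesis .
qed

lemma marginal_state_Suc_free:
  assumes "m < n" and Y: "\<And>t. Y t \<subseteq> \<Omega> t" and "Y (Suc m) = \<Omega> (Suc m)"
  shows "marginal_state (Suc m) Y = E (Suc m) (marginal_state m Y)"
  using assms by (simp add: marginal_state_Suc[OF _ Y] instrument_complete channel_carrier)

lemma marginal_state_Suc_pinned:
  assumes "m < n" and Y: "\<And>t. Y t \<subseteq> \<Omega> t" and "Y (Suc m) = {y}"
  shows "marginal_state (Suc m) Y = F (Suc m) y (E (Suc m) (marginal_state m Y))"
  using assms Y[of "Suc m"] by (simp add: marginal_state_Suc[OF _ Y] instrument_carrier channel_carrier)

lemma marginal_state_chain:
  assumes "a + l \<le> n" and Y: "\<And>t. Y t \<subseteq> \<Omega> t" and "\<And>t. a < t \<Longrightarrow> t \<le> a + l \<Longrightarrow> Y t = \<Omega> t"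
  shows "marginal_state (a + l) Y = chain E a l (marginal_state a Y)"
  using assms(1,3) by (induction l) (simp_all add: marginal_state_Suc_free[OF _ Y])

definition pinned_outcomes :: "nat \<Rightarrow> (nat \<Rightarrow> nat) \<Rightarrow> (nat \<Rightarrow> 'o) \<Rightarrow> nat \<Rightarrow> 'o set" where
  "pinned_outcomes k i c t = {y \<in> \<Omega> t. \<forall>j\<le>k. i j = t \<longrightarrow> y = c j}"

lemma pinned_outcomes_subset: "pinned_outcomes k i c t \<subseteq> \<Omega> t"
  by (auto simp: pinned_outcomes_def)

lemma pinned_outcomes_free: "t \<notin> i ` {..k} \<Longrightarrow> pinned_outcomes k i c t = \<Omega> t"
  by (auto simp: pinned_outcomes_def)

lemma pinned_outcomes_retained:
  assumes "sub_times n k i" and "j \<le> k" and "c j \<in> \<Omega> (i j)"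
  shows "pinned_outcomes k i c (i j) = {c j}"
  using assms strict_mono_on_eqD[OF sub_times_strict_mono[OF assms(1)]]
  by (auto simp: pinned_outcomes_def)

lemma PiE_pinned_outcomes:
  assumes "sub_times n k i"
  shows "PiE {..n} (pinned_outcomes k i c) = {w \<in> PiE {..n} \<Omega>. \<forall>j\<le>k. w (i j) = c j}"
  using sub_times_le_bound[OF assms] unfolding pinned_outcomes_def PiE_def Pi_def by auto

lemma sub_process_state:
  assumes sub: "sub_times n k i" and c: "\<forall>j\<le>k. c j \<in> \<Omega> (i j)"
  shows "j \<le> k \<Longrightarrow>
    measured_state \<rho> (sub_channels E i) (\<lambda>j. F (i j)) c j = marginal_state (i j) (pinned_outcomes k i c)"
proof (induction j)
  case 0
  have i0: "i 0 = 0"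
    using sub unfolding sub_times_def by simp
  with c have "c 0 \<in> \<Omega> 0"
    by auto
  moreover from this have "pinned_outcomes k i c 0 = {c 0}"
    using pinned_outcomes_retained[OF sub, of 0] i0 by simp
  ultimately show ?case
    using i0 by (simp add: marginal_state_0 pinned_outcomes_subset instrument_carrier initial_carrier)
next
  case (Suc j)
  define a l where "a = i j" and "l = i (Suc j) - i j - 1"
  have gap: "i (Suc j) = Suc (a + l)"
    using strict_mono_onD[OF sub_times_strict_mono[OF sub], of j "Suc j"] Suc.prems
    unfolding a_def l_def by simp
  have bound: "Suc (a + l) \<le> n"
    using sub_times_le_bound[OF sub Suc.prems] gap by simp
  have free: "pinned_outcomes k i c t = \<Omega> t" if "a < t" "t \<le> a + l" for t
    using that gap Suc.prems unfolding a_def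
    by (intro pinned_outcomes_free sub_times_not_retained_between[OF sub]) auto
  have channel: "sub_channels E i (Suc j) = chain E a (Suc l)"
    using gap by (simp add: sub_channels_def a_def)
  have "measured_state \<rho> (sub_channels E i) (\<lambda>j. F (i j)) c (Suc j)
      = F (i (Suc j)) (c (Suc j)) (chain E a (Suc l) (marginal_state a (pinned_outcomes k i c)))"
    using Suc channel by (simp only: measured_state.simps a_def)
  also have "\<dots> = F (Suc (a + l)) (c (Suc j)) (E (Suc (a + l)) (marginal_state (a + l) (pinned_outcomes k i c)))"
    using bound free gap by (simp add: marginal_state_chain pinned_outcomes_subset)
  also have "\<dots> = marginal_state (i (Suc j)) (pinned_outcomes k i c)"
  proof -
    have "pinned_outcomes k i c (Suc (a + l)) = {c (Suc j)}"
      using pinned_outcomes_retained[OF sub Suc.prems, of c] c[rule_format, OF Suc.prems] gap by simp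
    then show ?thesis
      using marginal_state_Suc_pinned[OF _ pinned_outcomes_subset] bound gap by simp
  qed
  finally show ?case .
qed

lemma sub_process_marginal:
  assumes sub: "sub_times n k i" and c: "\<forall>j\<le>k. c j \<in> \<Omega> (i j)"
  shows "mtrace (measured_state \<rho> (sub_channels E i) (\<lambda>j. F (i j)) c k)
       = (\<Sum>w\<in>{w \<in> PiE {..n} \<Omega>. \<forall>j\<le>k. w (i j) = c j}. mtrace (measured_state \<rho> E F w n))"
proof -
  define a where "a = i k"
  have bound: "a + (n - a) = n"
    using sub_times_le_bound[OF sub] unfolding a_def by simp
  have free: "pinned_outcomes k i c t = \<Omega> t" if "a < t" for t
    using that sub_times_not_retained_after[OF sub] pinned_outcomes_free unfolding a_def by blast
  have "mtrace (measured_state \<rho> (sub_channels E i) (\<lambda>j. F (i j)) c k)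
      = mtrace (chain E a (n - a) (marginal_state a (pinned_outcomes k i c)))"
    using sub_process_state[OF sub c] bound unfolding a_def
    by (simp add: mtrace_chain marginal_state_def)
  also have "\<dots> = mtrace (marginal_state n (pinned_outcomes k i c))"
    using marginal_state_chain[of a "n - a"] bound free by (simp add: pinned_outcomes_subset)
  also have "\<dots> = (\<Sum>w\<in>PiE {..n} (pinned_outcomes k i c). mtrace (measured_state \<rho> E F w n))"
    unfolding marginal_state_def
    by (intro mtrace_msum measured_state_carrier PiE_outcomes_mem[OF pinned_outcomes_subset]) auto
  finally show ?thesis
    by (simp add: PiE_pinned_outcomes[OF sub])
qed

lemma sub_process_marginal_onto:
  assumes sub: "sub_times n k i" and "C \<subseteq> i ` {..k}"
  shows "(\<Sum>c\<in>{c \<in> PiE {..k} (\<lambda>j. \<Omega> (i j)). \<forall>j\<le>k. i j \<in> C \<longrightarrow> c j = h (i j)}.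
            mtrace (measured_state \<rho> (sub_channels E i) (\<lambda>j. F (i j)) c k))
       = (\<Sum>w\<in>{w \<in> PiE {..n} \<Omega>. \<forall>t\<in>C. w t = h t}. mtrace (measured_state \<rho> E F w n))"
  by (subst sum_PiE_group_restrict[symmetric, OF outcomes_finite sub_times_le_bound[OF sub] assms(2)])
     (auto simp: PiE_iff sub_process_marginal[OF sub] intro!: sum.cong)

end

lemma quantum_process_initial_carrier: "quantum_process n d \<rho> E \<Longrightarrow> \<rho> \<in> carrier_mat (d 0) (d 0)"
  unfolding quantum_process_def density_op_def psd_def by blast

lemma quantum_process_channel:
  assumes "quantum_process n d \<rho> E" and "m < n"
  shows "lin_map (d m) (d (Suc m)) (E (Suc m))" and "trace_pres (d m) (E (Suc m))"
proof -
  have "Suc m \<in> {1..n}"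
    using assms(2) by simp
  with assms(1) have "cptp (d m) (d (Suc m)) (E (Suc m))"
    unfolding quantum_process_def by fastforce
  then show "lin_map (d m) (d (Suc m)) (E (Suc m))" and "trace_pres (d m) (E (Suc m))"
    unfolding cptp_def by simp_all
qed

lemma proj_family_carrier: "proj_family d S P \<Longrightarrow> x \<in> S \<Longrightarrow> P x \<in> carrier_mat d d"
  unfolding proj_family_def by blast

lemma proj_family_resolves_right:
  assumes P: "proj_family d S P" and X: "X \<in> carrier_mat d d"
  shows "msum d (\<lambda>x. X * P x) S = X"
proof -
  have fin: "finite S" and unity: "msum d P S = 1\<^sub>m d"
    using P unfolding proj_family_def by auto
  have "msum d (\<lambda>x. X * P x) S = X * msum d P S"
    using lin_map_msum[OF lin_map_mult_left[OF X] fin] proj_family_carrier[OF P] by simp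
  with X unity show ?thesis
    by simp
qed

lemma proj_family_resolves_left:
  assumes P: "proj_family d S P" and X: "X \<in> carrier_mat d d"
  shows "msum d (\<lambda>x. P x * X) S = X"
proof -
  have fin: "finite S" and unity: "msum d P S = 1\<^sub>m d"
    using P unfolding proj_family_def by auto
  have "msum d (\<lambda>x. P x * X) S = msum d P S * X"
    using lin_map_msum[OF lin_map_mult_right[OF X] fin] proj_family_carrier[OF P] by simp
  with X unity show ?thesis
    by simp
qed

lemma instrumented_process_right:
  assumes proc: "quantum_process n d \<rho> E" and meas: "measurements n d B PB"
  shows "instrumented_process n d \<rho> E (\<lambda>t x X. X * PB t x) B"
proof unfold_locales
  fix t assume "t \<le> n"
  then have P: "proj_family (d t) (B t) (PB t)"
    using meas unfolding measurements_def by blast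
  show "finite (B t)"
    using P unfolding proj_family_def by blast
  show "lin_map (d t) (d t) (\<lambda>X. X * PB t x)" if "x \<in> B t" for x
    using that P by (intro lin_map_mult_right proj_family_carrier)
  show "msum (d t) (\<lambda>x. X * PB t x) (B t) = X" if "X \<in> carrier_mat (d t) (d t)" for X
    using P that by (rule proj_family_resolves_right)
qed (use proc in \<open>auto intro: quantum_process_initial_carrier quantum_process_channel\<close>)

lemma instrumented_process_left:
  assumes proc: "quantum_process n d \<rho> E" and meas: "measurements n d A PA"
  shows "instrumented_process n d \<rho> E (\<lambda>t x X. PA t x * X) A"
proof unfold_locales
  fix t assume "t \<le> n"
  then have P: "proj_family (d t) (A t) (PA t)"
    using meas unfolding measurements_def by blast
  show "finite (A t)"
    using P unfolding proj_family_def by blast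
  show "lin_map (d t) (d t) (\<lambda>X. PA t x * X)" if "x \<in> A t" for x
    using that P by (intro lin_map_mult_left proj_family_carrier)
  show "msum (d t) (\<lambda>x. PA t x * X) (A t) = X" if "X \<in> carrier_mat (d t) (d t)" for X
    using P that by (rule proj_family_resolves_left)
qed (use proc in \<open>auto intro: quantum_process_initial_carrier quantum_process_channel\<close>)

lemma instrumented_process_doubled:
  assumes proc: "quantum_process n d \<rho> E"
    and measA: "measurements n d A PA" and measB: "measurements n d B PB"
  shows "instrumented_process n d \<rho> E (\<lambda>t p X. PA t (fst p) * X * PB t (snd p)) (\<lambda>t. A t \<times> B t)"
proof unfold_locales
  fix t assume "t \<le> n"
  then have PA: "proj_family (d t) (A t) (PA t)" and PB: "proj_family (d t) (B t) (PB t)"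
    using measA measB unfolding measurements_def by blast+
  show "finite (A t \<times> B t)"
    using PA PB unfolding proj_family_def by blast
  show "lin_map (d t) (d t) (\<lambda>X. PA t (fst p) * X * PB t (snd p))" if "p \<in> A t \<times> B t" for p
    using that PA PB by (intro lin_map_sandwich proj_family_carrier) auto
  show "msum (d t) (\<lambda>p. PA t (fst p) * X * PB t (snd p)) (A t \<times> B t) = X"
    if X: "X \<in> carrier_mat (d t) (d t)" for X
  proof -
    have "msum (d t) (\<lambda>p. PA t (fst p) * X * PB t (snd p)) (A t \<times> B t)
        = msum (d t) (\<lambda>x. PA t x * X) (A t)"
      unfolding msum_Times fst_conv snd_conv
      using X proj_family_carrier[OF PA]
      by (intro msum_cong proj_family_resolves_right[OF PB]) (auto intro: mult_carrier_mat)
    also have "\<dots> = X"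
      using PA X by (rule proj_family_resolves_left)
    finally show ?thesis .
  qed
qed (use proc in \<open>auto intro: quantum_process_initial_carrier quantum_process_channel\<close>)

lemma rstate_eq_measured_state: "rstate \<rho> E P b m = measured_state \<rho> E (\<lambda>t x X. X * P t x) b m"
  by (induction m) simp_all

lemma lstate_eq_measured_state: "lstate \<rho> E P a m = measured_state \<rho> E (\<lambda>t x X. P t x * X) a m"
  by (induction m) simp_all

lemma dstate_eq_measured_state:
  "dstate \<rho> E PA PB a b m
 = measured_state \<rho> E (\<lambda>t p X. PA t (fst p) * X * PB t (snd p)) (\<lambda>t. (a t, b t)) m"
  by (induction m) simp_all

lemma sum_doubled_KD_joint:
  "(\<Sum>(a, b)\<in>{(a, b). a \<in> PiE {..m} A \<and> b \<in> PiE {..m} B \<and> Q a b}. doubled_KD m \<rho> E PA PB a b)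
 = (\<Sum>w\<in>{w \<in> PiE {..m} (\<lambda>t. A t \<times> B t). Q (\<lambda>t\<in>{..m}. fst (w t)) (\<lambda>t\<in>{..m}. snd (w t))}.
      mtrace (measured_state \<rho> E (\<lambda>t p X. PA t (fst p) * X * PB t (snd p)) w m))"
  unfolding sum_PiE_pairs doubled_KD_def dstate_eq_measured_state
  by (intro sum.cong refl arg_cong[where f = mtrace] measured_state_cong) simp

lemma right_KD_sub_process_marginal:
  assumes "quantum_process n d \<rho> E" and "measurements n d B PB" and "sub_times n k i"
    and "\<forall>j\<le>k. c j \<in> B (i j)"
  shows "right_KD k \<rho> (sub_channels E i) (\<lambda>j. PB (i j)) c
       = (\<Sum>b\<in>{b \<in> PiE {..n} B. \<forall>j\<le>k. b (i j) = c j}. right_KD n \<rho> E PB b)"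
  using instrumented_process.sub_process_marginal[OF instrumented_process_right[OF assms(1,2)] assms(3,4)]
  by (simp add: right_KD_def rstate_eq_measured_state)

lemma right_KD_sub_process_marginal_onto:
  assumes "quantum_process n d \<rho> E" and "measurements n d B PB" and "sub_times n k i"
    and "C \<subseteq> i ` {..k}"
  shows "(\<Sum>c\<in>{c \<in> PiE {..k} (\<lambda>j. B (i j)). \<forall>j\<le>k. i j \<in> C \<longrightarrow> c j = h (i j)}.
            right_KD k \<rho> (sub_channels E i) (\<lambda>j. PB (i j)) c)
       = (\<Sum>b\<in>{b \<in> PiE {..n} B. \<forall>t\<in>C. b t = h t}. right_KD n \<rho> E PB b)"
  using instrumented_process.sub_process_marginal_onto[OF instrumented_process_right[OF assms(1,2)] assms(3,4)]
  by (simp add: right_KD_def rstate_eq_measured_state)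

lemma left_KD_sub_process_marginal:
  assumes "quantum_process n d \<rho> E" and "measurements n d A PA" and "sub_times n k i"
    and "\<forall>j\<le>k. c j \<in> A (i j)"
  shows "left_KD k \<rho> (sub_channels E i) (\<lambda>j. PA (i j)) c
       = (\<Sum>a\<in>{a \<in> PiE {..n} A. \<forall>j\<le>k. a (i j) = c j}. left_KD n \<rho> E PA a)"
  using instrumented_process.sub_process_marginal[OF instrumented_process_left[OF assms(1,2)] assms(3,4)]
  by (simp add: left_KD_def lstate_eq_measured_state)

lemma left_KD_sub_process_marginal_onto:
  assumes "quantum_process n d \<rho> E" and "measurements n d A PA" and "sub_times n k i"
    and "C \<subseteq> i ` {..k}"
  shows "(\<Sum>c\<in>{c \<in> PiE {..k} (\<lambda>j. A (i j)). \<forall>j\<le>k. i j \<in> C \<longrightarrow> c j = h (i j)}.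
            left_KD k \<rho> (sub_channels E i) (\<lambda>j. PA (i j)) c)
       = (\<Sum>a\<in>{a \<in> PiE {..n} A. \<forall>t\<in>C. a t = h t}. left_KD n \<rho> E PA a)"
  using instrumented_process.sub_process_marginal_onto[OF instrumented_process_left[OF assms(1,2)] assms(3,4)]
  by (simp add: left_KD_def lstate_eq_measured_state)

lemma doubled_KD_sub_process_marginal:
  assumes proc: "quantum_process n d \<rho> E"
    and measA: "measurements n d A PA" and measB: "measurements n d B PB"
    and sub: "sub_times n k i" and c: "\<forall>j\<le>k. c j \<in> A (i j) \<and> c' j \<in> B (i j)"
  shows "doubled_KD k \<rho> (sub_channels E i) (\<lambda>j. PA (i j)) (\<lambda>j. PB (i j)) c c'
       = (\<Sum>(a, b)\<in>{(a, b). a \<in> PiE {..n} A \<and> b \<in> PiE {..n} B \<and> (\<forall>j\<le>k. a (i j) = c j \<and> b (i j) = c' j)}.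
            doubled_KD n \<rho> E PA PB a b)"
proof -
  have "doubled_KD k \<rho> (sub_channels E i) (\<lambda>j. PA (i j)) (\<lambda>j. PB (i j)) c c'
      = mtrace (measured_state \<rho> (sub_channels E i) (\<lambda>j p X. PA (i j) (fst p) * X * PB (i j) (snd p))
                  (\<lambda>t. (c t, c' t)) k)"
    by (simp add: doubled_KD_def dstate_eq_measured_state)
  also have "\<dots> = (\<Sum>w\<in>{w \<in> PiE {..n} (\<lambda>t. A t \<times> B t). \<forall>j\<le>k. w (i j) = (c j, c' j)}.
                    mtrace (measured_state \<rho> E (\<lambda>t p X. PA t (fst p) * X * PB t (snd p)) w n))"
    using instrumented_process.sub_process_marginal[OF instrumented_process_doubled[OF proc measA measB] sub,
        of "\<lambda>t. (c t, c' t)"] c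
    by simp
  also have "\<dots> = (\<Sum>(a, b)\<in>{(a, b). a \<in> PiE {..n} A \<and> b \<in> PiE {..n} B \<and> (\<forall>j\<le>k. a (i j) = c j \<and> b (i j) = c' j)}.
                    doubled_KD n \<rho> E PA PB a b)"
    unfolding sum_doubled_KD_joint
    using sub_times_le_bound[OF sub] by (intro sum.cong) (auto simp: prod_eq_iff)
  finally show ?thesis .
qed

lemma doubled_KD_sub_process_marginal_onto:
  assumes proc: "quantum_process n d \<rho> E"
    and measA: "measurements n d A PA" and measB: "measurements n d B PB"
    and sub: "sub_times n k i" and C: "C \<subseteq> i ` {..k}"
  shows "(\<Sum>(c, c')\<in>{(c, c'). c \<in> PiE {..k} (\<lambda>j. A (i j)) \<and> c' \<in> PiE {..k} (\<lambda>j. B (i j)) \<and>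
                      (\<forall>j\<le>k. i j \<in> C \<longrightarrow> c j = h (i j) \<and> c' j = h' (i j))}.
            doubled_KD k \<rho> (sub_channels E i) (\<lambda>j. PA (i j)) (\<lambda>j. PB (i j)) c c')
       = (\<Sum>(a, b)\<in>{(a, b). a \<in> PiE {..n} A \<and> b \<in> PiE {..n} B \<and> (\<forall>t\<in>C. a t = h t \<and> b t = h' t)}.
            doubled_KD n \<rho> E PA PB a b)"
proof -
  have "C \<subseteq> {..n}"
    using C sub_times_le_bound[OF sub] by auto
  then have "(\<Sum>(a, b)\<in>{(a, b). a \<in> PiE {..n} A \<and> b \<in> PiE {..n} B \<and> (\<forall>t\<in>C. a t = h t \<and> b t = h' t)}.
               doubled_KD n \<rho> E PA PB a b)
      = (\<Sum>w\<in>{w \<in> PiE {..n} (\<lambda>t. A t \<times> B t). \<forall>t\<in>C. w t = (h t, h' t)}.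
           mtrace (measured_state \<rho> E (\<lambda>t p X. PA t (fst p) * X * PB t (snd p)) w n))"
    unfolding sum_doubled_KD_joint by (intro sum.cong) (auto simp: prod_eq_iff)
  moreover have "(\<Sum>(c, c')\<in>{(c, c'). c \<in> PiE {..k} (\<lambda>j. A (i j)) \<and> c' \<in> PiE {..k} (\<lambda>j. B (i j)) \<and>
                      (\<forall>j\<le>k. i j \<in> C \<longrightarrow> c j = h (i j) \<and> c' j = h' (i j))}.
            doubled_KD k \<rho> (sub_channels E i) (\<lambda>j. PA (i j)) (\<lambda>j. PB (i j)) c c')
      = (\<Sum>w\<in>{w \<in> PiE {..k} (\<lambda>j. A (i j) \<times> B (i j)). \<forall>j\<le>k. i j \<in> C \<longrightarrow> w j = (h (i j), h' (i j))}.
           mtrace (measured_state \<rho> (sub_channels E i) (\<lambda>j p X. PA (i j) (fst p) * X * PB (i j) (snd p)) w k))"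
    unfolding sum_doubled_KD_joint by (intro sum.cong) (auto simp: prod_eq_iff)
  ultimately show ?thesis
    using instrumented_process.sub_process_marginal_onto[OF instrumented_process_doubled[OF proc measA measB] sub C,
        of "\<lambda>t. (h t, h' t)"]
    by simp
qed

theorem lemma1:
  fixes n k k' :: nat and d i i' :: "nat \<Rightarrow> nat" and \<rho> :: "complex mat"
    and E :: "nat \<Rightarrow> complex mat \<Rightarrow> complex mat"
    and A B :: "nat \<Rightarrow> 'b set" and PA PB :: "nat \<Rightarrow> 'b \<Rightarrow> complex mat"
  assumes proc: "quantum_process n d \<rho> E"
    and measA: "measurements n d A PA"
    and measB: "measurements n d B PB"
    and sub: "sub_times n k i"
    and sub': "sub_times n k' i'"
    and inter: "i ` {..k} \<inter> i' ` {..k'} \<noteq> {}"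
  shows
    \<comment> \<open>right KD of the sub-process = marginal of the right KD of the process\<close>
    "(\<forall>c. (\<forall>j\<le>k. c j \<in> B (i j)) \<longrightarrow>
        right_KD k \<rho> (sub_channels E i) (\<lambda>j. PB (i j)) c =
        (\<Sum>b \<in> {b \<in> PiE {..n} B. \<forall>j\<le>k. b (i j) = c j}. right_KD n \<rho> E PB b))
   \<and> \<comment> \<open>left KD\<close>
     (\<forall>c. (\<forall>j\<le>k. c j \<in> A (i j)) \<longrightarrow>
        left_KD k \<rho> (sub_channels E i) (\<lambda>j. PA (i j)) c =
        (\<Sum>a \<in> {a \<in> PiE {..n} A. \<forall>j\<le>k. a (i j) = c j}. left_KD n \<rho> E PA a))
   \<and> \<comment> \<open>doubled KD\<close>
     (\<forall>c c'. (\<forall>j\<le>k. c j \<in> A (i j) \<and> c' j \<in> B (i j)) \<longrightarrow>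
        doubled_KD k \<rho> (sub_channels E i) (\<lambda>j. PA (i j)) (\<lambda>j. PB (i j)) c c' =
        (\<Sum>(a, b) \<in> {(a, b). a \<in> PiE {..n} A \<and> b \<in> PiE {..n} B \<and>
                            (\<forall>j\<le>k. a (i j) = c j \<and> b (i j) = c' j)}.
           doubled_KD n \<rho> E PA PB a b))
   \<and> \<comment> \<open>consistency of marginals onto the common times (right)\<close>
     (\<forall>h. (\<Sum>c \<in> {c \<in> PiE {..k} (\<lambda>j. B (i j)).
                    \<forall>j\<le>k. i j \<in> i ` {..k} \<inter> i' ` {..k'} \<longrightarrow> c j = h (i j)}.
            right_KD k \<rho> (sub_channels E i) (\<lambda>j. PB (i j)) c) =
          (\<Sum>c \<in> {c \<in> PiE {..k'} (\<lambda>j. B (i' j)).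
                    \<forall>j\<le>k'. i' j \<in> i ` {..k} \<inter> i' ` {..k'} \<longrightarrow> c j = h (i' j)}.
            right_KD k' \<rho> (sub_channels E i') (\<lambda>j. PB (i' j)) c))
   \<and> \<comment> \<open>consistency (left)\<close>
     (\<forall>h. (\<Sum>c \<in> {c \<in> PiE {..k} (\<lambda>j. A (i j)).
                    \<forall>j\<le>k. i j \<in> i ` {..k} \<inter> i' ` {..k'} \<longrightarrow> c j = h (i j)}.
            left_KD k \<rho> (sub_channels E i) (\<lambda>j. PA (i j)) c) =
          (\<Sum>c \<in> {c \<in> PiE {..k'} (\<lambda>j. A (i' j)).
                    \<forall>j\<le>k'. i' j \<in> i ` {..k} \<inter> i' ` {..k'} \<longrightarrow> c j = h (i' j)}.
            left_KD k' \<rho> (sub_channels E i') (\<lambda>j. PA (i' j)) c))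
   \<and> \<comment> \<open>consistency (doubled)\<close>
     (\<forall>h h'. (\<Sum>(c, c') \<in> {(c, c'). c \<in> PiE {..k} (\<lambda>j. A (i j)) \<and> c' \<in> PiE {..k} (\<lambda>j. B (i j)) \<and>
                    (\<forall>j\<le>k. i j \<in> i ` {..k} \<inter> i' ` {..k'} \<longrightarrow> c j = h (i j) \<and> c' j = h' (i j))}.
            doubled_KD k \<rho> (sub_channels E i) (\<lambda>j. PA (i j)) (\<lambda>j. PB (i j)) c c') =
          (\<Sum>(c, c') \<in> {(c, c'). c \<in> PiE {..k'} (\<lambda>j. A (i' j)) \<and> c' \<in> PiE {..k'} (\<lambda>j. B (i' j)) \<and>
                    (\<forall>j\<le>k'. i' j \<in> i ` {..k} \<inter> i' ` {..k'} \<longrightarrow> c j = h (i' j) \<and> c' j = h' (i' j))}.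
            doubled_KD k' \<rho> (sub_channels E i') (\<lambda>j. PA (i' j)) (\<lambda>j. PB (i' j)) c c'))"
proof -
  have common: "i ` {..k} \<inter> i' ` {..k'} \<subseteq> i ` {..k}" "i ` {..k} \<inter> i' ` {..k'} \<subseteq> i' ` {..k'}"
    by auto
  show ?thesis
    using right_KD_sub_process_marginal[OF proc measB sub]
      left_KD_sub_process_marginal[OF proc measA sub]
      doubled_KD_sub_process_marginal[OF proc measA measB sub]
      right_KD_sub_process_marginal_onto[OF proc measB sub common(1)]
      right_KD_sub_process_marginal_onto[OF proc measB sub' common(2)]
      left_KD_sub_process_marginal_onto[OF proc measA sub common(1)]
      left_KD_sub_process_marginal_onto[OF proc measA sub' common(2)]
      doubled_KD_sub_process_marginal_onto[OF proc measA measB sub common(1)]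
      doubled_KD_sub_process_marginal_onto[OF proc measA measB sub' common(2)]
    by simp
qed

end
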